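(* Let $n\ge3$ and let $\overrightarrow{C_n}$ be $\Theta$-oriented. For a distance set $D\subseteq\{0,1,\dots,n-2\}$ of $\overrightarrow{C_n}$, $\overrightarrow{C_n}$ is $D$-antimagic if and only if $\min(D)\le1$.
   Context: An oriented graph is a simple graph each of whose edges is given one direction (an arc $(u,v)$ goes from $u$ to $v$). For vertices $u,v$, $d(u,v)$ is the length of a shortest directed path from $u$ to $v$ ($d(u,u)=0$, $\infty$ if no path). A distance set of an oriented graph is a nonempty set $D$ of nonnegative integers each of which is a finite distance $d(u,v)$ for some pair of vertices. $N_D(v)=\{y : d(v,y)\in D\}$; for a bijection $f:V\to\{1,\dots,|V|\}$, $\omega_D(v)=\sum_{x\in N_D(v)}f(x)$ (empty sum $0$); $f$ is $D$-antimagic if distinct vertices have distinct $D$-weights, and the graph is $D$-antimagic if such an $f$ exists. A $\Theta$-oriented cycle $\overrightarrow{C_n}$ is an orientation of the $n$-cycle with exactly one source (in-degree $0$) and exactly one sink (out-degree $0$), which are adjacent; up to relabeling, its vertices are $v_1,\dots,v_n$ and its arcs are $(v_i,v_{i+1})$, $1\le i\le n-1$, and $(v_1,v_n)$. Its diameter is $n-2$. *)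

theory Defs
  imports Main
begin

text \<open>A digraph is given by a vertex set V and an arc relation A (pairs (u,v) = arc from u to v).
  A walk of length k from u to v exists iff (u,v) is in A ^^ k.\<close>

definition has_dist :: "('a \<times> 'a) set \<Rightarrow> 'a \<Rightarrow> 'a \<Rightarrow> nat \<Rightarrow> bool" where
  "has_dist A u v k \<longleftrightarrow> (u, v) \<in> A ^^ k \<and> (\<forall>j<k. (u, v) \<notin> A ^^ j)"

definition is_distance_set :: "'a set \<Rightarrow> ('a \<times> 'a) set \<Rightarrow> nat set \<Rightarrow> bool" where
  "is_distance_set V A D \<longleftrightarrow> D \<noteq> {} \<and> (\<forall>k\<in>D. \<exists>u\<in>V. \<exists>v\<in>V. has_dist A u v k)"

definition N_D :: "'a set \<Rightarrow> ('a \<times> 'a) set \<Rightarrow> nat set \<Rightarrow> 'a \<Rightarrow> 'a set" where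
  "N_D V A D v = {y \<in> V. \<exists>k\<in>D. has_dist A v y k}"

definition D_weight :: "'a set \<Rightarrow> ('a \<times> 'a) set \<Rightarrow> nat set \<Rightarrow> ('a \<Rightarrow> nat) \<Rightarrow> 'a \<Rightarrow> nat" where
  "D_weight V A D f v = (\<Sum>x\<in>N_D V A D v. f x)"

definition D_antimagic_labeling :: "'a set \<Rightarrow> ('a \<times> 'a) set \<Rightarrow> nat set \<Rightarrow> ('a \<Rightarrow> nat) \<Rightarrow> bool" where
  "D_antimagic_labeling V A D f \<longleftrightarrow>
     bij_betw f V {1..card V} \<and> inj_on (D_weight V A D f) V"

definition D_antimagic :: "'a set \<Rightarrow> ('a \<times> 'a) set \<Rightarrow> nat set \<Rightarrow> bool" where
  "D_antimagic V A D \<longleftrightarrow> (\<exists>f. D_antimagic_labeling V A D f)"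

definition theta_vertices :: "nat \<Rightarrow> nat set" where
  "theta_vertices n = {1..n}"

definition theta_arcs :: "nat \<Rightarrow> (nat \<times> nat) set" where
  "theta_arcs n = {(i, i + 1) | i. 1 \<le> i \<and> i \<le> n - 1} \<union> {(1, n)}"

end

theory Submission
  imports Defs
begin

text \<open>In the \<Theta>-oriented cycle on 1, ..., n the distance d(u, v) is v - u for u \<le> v, except
  d(1, n) = 1.  If every element of D is at least 2, the vertices n - 1 and n have empty
  D-neighbourhoods, so they receive the same weight 0 under every labeling.  If D contains 0 or 1,
  the labeling x \<mapsto> n + 1 - x works: passing from u to a later vertex lowers every summand of the
  weight and only removes summands, and the summand belonging to min D is still present at u, so
  the weights strictly decrease along the cycle (vertex 1 can only gain the extra neighbour n).\<close>

lemma theta_arcs_iff: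
  "(u, v) \<in> theta_arcs n \<longleftrightarrow> (1 \<le> u \<and> u < n \<and> v = u + 1) \<or> (u = 1 \<and> v = n)"
  unfolding theta_arcs_def by auto

lemma theta_arcs_relpow_iff:
  assumes "n \<ge> 2" "1 \<le> u" "u \<le> n"
  shows "(u, v) \<in> theta_arcs n ^^ k \<longleftrightarrow> (v = u + k \<and> v \<le> n) \<or> (k = 1 \<and> u = 1 \<and> v = n)"
proof (induction k arbitrary: v)
  case 0
  then show ?case using assms by auto
next
  case (Suc k)
  have "(u, v) \<in> theta_arcs n ^^ Suc k \<longleftrightarrow> (\<exists>w. (u, w) \<in> theta_arcs n ^^ k \<and> (w, v) \<in> theta_arcs n)"
    by auto
  also have "\<dots> \<longleftrightarrow> (v = u + Suc k \<and> v \<le> n) \<or> (Suc k = 1 \<and> u = 1 \<and> v = n)"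
    unfolding Suc.IH theta_arcs_iff using assms by auto
  finally show ?case .
qed

lemma theta_has_dist_iff:
  assumes "n \<ge> 2" "u \<in> {1..n}" "v \<in> {1..n}"
  shows "has_dist (theta_arcs n) u v k \<longleftrightarrow>
    (if u = 1 \<and> v = n then k = 1 else u \<le> v \<and> k = v - u)"
proof -
  have "1 \<le> u" "u \<le> n" using assms(2) by auto
  show ?thesis
    using assms unfolding has_dist_def theta_arcs_relpow_iff[OF assms(1) \<open>1 \<le> u\<close> \<open>u \<le> n\<close>]
    by (auto; presburger)
qed

lemma theta_N_D_eq:
  assumes "n \<ge> 2" "u \<in> {2..n}"
  shows "N_D {1..n} (theta_arcs n) D u = (+) u ` {d \<in> D. u + d \<le> n}"
  using assms theta_has_dist_iff[OF assms(1), of u] unfolding N_D_def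
  by (auto simp: image_iff) (metis le_add_diff_inverse)

lemma theta_N_D_one_superset:
  assumes "n \<ge> 2"
  shows "(+) 1 ` {d \<in> D. d \<le> n - 2} \<subseteq> N_D {1..n} (theta_arcs n) D 1"
  using assms theta_has_dist_iff[OF assms(1), of 1] unfolding N_D_def
  by force

lemma theta_not_D_antimagic:
  assumes "n \<ge> 3" and "\<forall>d\<in>D. d \<ge> 2"
  shows "\<not> D_antimagic {1..n} (theta_arcs n) D"
proof
  assume "D_antimagic {1..n} (theta_arcs n) D"
  then obtain f where inj: "inj_on (D_weight {1..n} (theta_arcs n) D f) {1..n}"
    unfolding D_antimagic_def D_antimagic_labeling_def by blast
  have "N_D {1..n} (theta_arcs n) D u = {}" if "u \<in> {n - 1, n}" for u
    using theta_N_D_eq[of n u D] that assms by fastforce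
  then have "D_weight {1..n} (theta_arcs n) D f (n - 1) = D_weight {1..n} (theta_arcs n) D f n"
    unfolding D_weight_def by simp
  with inj have "n - 1 = n"
    by (rule inj_onD) (use assms in auto)
  with assms show False by simp
qed

definition rev_label_weight :: "nat \<Rightarrow> nat set \<Rightarrow> nat \<Rightarrow> nat" where
  "rev_label_weight n D u = (\<Sum>d\<in>{d \<in> D. u + d \<le> n}. n + 1 - (u + d))"

lemma rev_label_weight_strict_antimono:
  assumes "finite D" "m \<in> D" "m \<le> 1" "i < j" "j \<le> n"
  shows "rev_label_weight n D j < rev_label_weight n D i"
proof -
  let ?Dj = "{d \<in> D. j + d \<le> n}" and ?Di = "{d \<in> D. i + d \<le> n}"
  have "finite ?Di" using assms(1) by simp
  have "?Dj \<subseteq> ?Di" using assms(4) by auto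
  show ?thesis
  proof (cases "?Dj = {}")
    case True
    have "m \<in> ?Di" "n + 1 - (i + m) > 0" using assms by auto
    then have "0 < rev_label_weight n D i"
      unfolding rev_label_weight_def by (intro sum_pos2[OF \<open>finite ?Di\<close>]) auto
    moreover have "rev_label_weight n D j = 0"
      unfolding rev_label_weight_def True by simp
    ultimately show ?thesis by simp
  next
    case False
    have "rev_label_weight n D j < (\<Sum>d\<in>?Dj. n + 1 - (i + d))"
      unfolding rev_label_weight_def
      by (rule sum_strict_mono) (use assms(1,4) False in auto)
    also have "\<dots> \<le> rev_label_weight n D i"
      unfolding rev_label_weight_def by (rule sum_mono2[OF \<open>finite ?Di\<close> \<open>?Dj \<subseteq> ?Di\<close>]) simp
    finally show ?thesis .
  qed
qed

lemma D_weight_theta_rev_label: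
  assumes "n \<ge> 2" "u \<in> {2..n}"
  shows "D_weight {1..n} (theta_arcs n) D (\<lambda>x. n + 1 - x) u = rev_label_weight n D u"
  unfolding D_weight_def theta_N_D_eq[OF assms] rev_label_weight_def
  by (simp add: sum.reindex)

lemma D_weight_theta_rev_label_one:
  assumes "n \<ge> 2" "D \<subseteq> {..n - 2}"
  shows "rev_label_weight n D 1 \<le> D_weight {1..n} (theta_arcs n) D (\<lambda>x. n + 1 - x) 1"
proof -
  have "{d \<in> D. 1 + d \<le> n} = {d \<in> D. d \<le> n - 2}" using assms by auto
  then have "rev_label_weight n D 1 = (\<Sum>x\<in>(+) 1 ` {d \<in> D. d \<le> n - 2}. n + 1 - x)"
    unfolding rev_label_weight_def by (simp add: sum.reindex)
  also have "\<dots> \<le> D_weight {1..n} (theta_arcs n) D (\<lambda>x. n + 1 - x) 1"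
    unfolding D_weight_def N_D_def
    by (rule sum_mono2) (use theta_N_D_one_superset[OF assms(1)] in \<open>auto simp: N_D_def\<close>)
  finally show ?thesis .
qed

lemma theta_D_antimagic:
  assumes "n \<ge> 2" "D \<subseteq> {..n - 2}" "m \<in> D" "m \<le> 1"
  shows "D_antimagic {1..n} (theta_arcs n) D"
proof -
  let ?f = "\<lambda>x. n + 1 - x"
  let ?w = "D_weight {1..n} (theta_arcs n) D ?f"
  have "finite D" using assms(2) finite_subset by blast
  have "?w j < ?w i" if "i \<in> {1..n}" "j \<in> {1..n}" "i < j" for i j
  proof -
    have "?w j = rev_label_weight n D j"
      using D_weight_theta_rev_label[OF assms(1)] that by simp
    also have "\<dots> < rev_label_weight n D i"
      using rev_label_weight_strict_antimono[OF \<open>finite D\<close> assms(3,4)] that by simp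
    also have "\<dots> \<le> ?w i"
      using D_weight_theta_rev_label[OF assms(1), of i] D_weight_theta_rev_label_one[OF assms(1,2)] that
      by (cases "i = 1") auto
    finally show ?thesis .
  qed
  then have "strict_antimono_on {1..n} ?w"
    by (intro monotone_onI) auto
  then have "inj_on ?w {1..n}"
    by (simp add: strict_antimono_iff_antimono)
  moreover have "bij_betw ?f {1..n} {1..n}"
    by (rule bij_betw_byWitness[where f' = ?f]) auto
  ultimately show ?thesis
    unfolding D_antimagic_def D_antimagic_labeling_def by auto
qed

theorem mainTheorem8:
  fixes n :: nat and D :: "nat set"
  assumes "n \<ge> 3"
    and "D \<subseteq> {0..n - 2}"
    and "is_distance_set (theta_vertices n) (theta_arcs n) D"
  shows "D_antimagic (theta_vertices n) (theta_arcs n) D \<longleftrightarrow> Min D \<le> 1"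
proof -
  have "finite D" "D \<noteq> {}"
    using assms(2,3) finite_subset unfolding is_distance_set_def by auto
  show ?thesis
  proof
    assume "D_antimagic (theta_vertices n) (theta_arcs n) D"
    then have "\<not> (\<forall>d\<in>D. d \<ge> 2)"
      using theta_not_D_antimagic[OF assms(1)] unfolding theta_vertices_def by blast
    then obtain d where "d \<in> D" "d \<le> 1" by auto
    then show "Min D \<le> 1"
      using Min_le[OF \<open>finite D\<close>] le_trans by blast
  next
    assume "Min D \<le> 1"
    have "n \<ge> 2" "D \<subseteq> {..n - 2}" using assms(1,2) by auto
    moreover have "Min D \<in> D" using \<open>finite D\<close> \<open>D \<noteq> {}\<close> by simp
    ultimately show "D_antimagic (theta_vertices n) (theta_arcs n) D"
      unfolding theta_vertices_def using theta_D_antimagic \<open>Min D \<le> 1\<close> by blast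
  qed
qed

end
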